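(* Let $P$ be a finite poset. If $I\subseteq P$ is a poset ideal, then $\mathfrak{p}(I)=(x_p)_{p\in I}\subseteq k[x_P]$ is a $P$-stable monomial prime ideal. Conversely every $P$-stable monomial prime ideal $\mathfrak{p}(S)=(x_p)_{p\in S}$, $S\subseteq P$, is of this form, i.e. $S$ is a poset ideal.
   Context: $k$ is a field and $k[x_P]$ the polynomial ring in variables $x_p$, $p\in P$. For $b\in P$, a $b$-chain is a multichain $C: p_1\le\dots\le p_r$ with $p_r\le b$; its length is $r$, $m_C=\prod x_{p_i}$; $C$ is in a monomial $m$ if $m_C\mid m$; a longest $b$-chain in $m$ is one of maximal length among $b$-chains in $m$; $C$ goes through $a$ if $a\le b$ and $a$ is comparable to every $p_i$. For an antichain $B$, $m_B=\prod_{b\in B}x_b$. A monomial ideal $I$ is $P$-stable if whenever $m=n\,m_B\in I$ ($n$ a monomial, $B$ an antichain) and $a\in P$ is such that for every $b\in B$ some longest $b$-chain in $m$ goes through $a$, then $n\,x_a\in I$. *)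

theory Defs
  imports Main "HOL-Library.Multiset"
begin

text \<open>The poset is a finite subset P of a partially ordered type 'a (with the induced order).
Monomials of k[x_P] are represented by finite multisets over P (exponent vectors).
A monomial ideal is determined by the set of monomials it contains, so we represent it
by that set: a set of monomials closed under multiplication by monomials.\<close>

definition monomial :: "'a set \<Rightarrow> 'a multiset \<Rightarrow> bool" where
  "monomial P m \<longleftrightarrow> set_mset m \<subseteq> P"

definition monomial_ideal :: "'a set \<Rightarrow> 'a multiset set \<Rightarrow> bool" where
  "monomial_ideal P I \<longleftrightarrow> (\<forall>m\<in>I. monomial P m) \<and>
     (\<forall>m\<in>I. \<forall>n. monomial P n \<longrightarrow> m + n \<in> I)"

definition prime_mon_ideal :: "'a set \<Rightarrow> 'a set \<Rightarrow> 'a multiset set" where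
  "prime_mon_ideal P S = {m. monomial P m \<and> (\<exists>p\<in>S. p \<in># m)}"

definition poset_ideal :: "'a::order set \<Rightarrow> 'a set \<Rightarrow> bool" where
  "poset_ideal P I \<longleftrightarrow> I \<subseteq> P \<and> (\<forall>p\<in>I. \<forall>q\<in>P. q \<le> p \<longrightarrow> q \<in> I)"

definition antichain_in :: "'a::order set \<Rightarrow> 'a set \<Rightarrow> bool" where
  "antichain_in P B \<longleftrightarrow> B \<subseteq> P \<and> (\<forall>x\<in>B. \<forall>y\<in>B. x \<le> y \<longrightarrow> x = y)"

definition b_chain :: "'a::order set \<Rightarrow> 'a \<Rightarrow> 'a list \<Rightarrow> bool" where
  "b_chain P b C \<longleftrightarrow> set C \<subseteq> P \<and> sorted_wrt (\<le>) C \<and> (\<forall>p\<in>set C. p \<le> b)"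

definition chain_in :: "'a list \<Rightarrow> 'a multiset \<Rightarrow> bool" where
  "chain_in C m \<longleftrightarrow> mset C \<subseteq># m"

definition longest_b_chain :: "'a::order set \<Rightarrow> 'a \<Rightarrow> 'a list \<Rightarrow> 'a multiset \<Rightarrow> bool" where
  "longest_b_chain P b C m \<longleftrightarrow> b_chain P b C \<and> chain_in C m \<and>
     (\<forall>C'. b_chain P b C' \<and> chain_in C' m \<longrightarrow> length C' \<le> length C)"

definition goes_through :: "'a::order \<Rightarrow> 'a \<Rightarrow> 'a list \<Rightarrow> bool" where
  "goes_through a b C \<longleftrightarrow> a \<le> b \<and> (\<forall>p\<in>set C. a \<le> p \<or> p \<le> a)"

definition P_stable :: "'a::order set \<Rightarrow> 'a multiset set \<Rightarrow> bool" where
  "P_stable P I \<longleftrightarrow>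
     (\<forall>n B a. monomial P n \<and> antichain_in P B \<and> n + mset_set B \<in> I \<and> a \<in> P \<and>
        (\<forall>b\<in>B. \<exists>C. longest_b_chain P b C (n + mset_set B) \<and> goes_through a b C)
        \<longrightarrow> n + {#a#} \<in> I)"

end

theory Submission
  imports Defs
begin

text \<open>If a variable of a poset ideal I divides n m_B, it either divides n, or it is x_b for some
b \<in> B; in the latter case a longest b-chain through a forces a \<le> b, so a \<in> I and x_a divides
n x_a. Conversely, if the prime ideal of S is P-stable and q \<le> p \<in> S, apply stability to the
monomial x_p: the one-element chain [p] is its longest p-chain and goes through q, so x_q lies in
the ideal, i.e. q \<in> S.\<close>

lemma monomial_ideal_prime_mon_ideal: "monomial_ideal P (prime_mon_ideal P S)"
  unfolding monomial_ideal_def prime_mon_ideal_def monomial_def by auto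

lemma mem_mset_set_imp_mem: "x \<in># mset_set A \<Longrightarrow> x \<in> A"
  by (cases "finite A") auto

lemma goes_through_imp_le: "goes_through a b C \<Longrightarrow> a \<le> b"
  by (simp add: goes_through_def)

lemma P_stable_prime_mon_ideal:
  assumes I: "poset_ideal P I"
  shows "P_stable P (prime_mon_ideal P I)"
  unfolding P_stable_def
proof (intro allI impI, elim conjE)
  fix n B a
  assume n: "monomial P n" and m: "n + mset_set B \<in> prime_mon_ideal P I" and a: "a \<in> P"
    and chains: "\<forall>b\<in>B. \<exists>C. longest_b_chain P b C (n + mset_set B) \<and> goes_through a b C"
  have mon: "monomial P (n + {#a#})"
    using n a by (auto simp: monomial_def)
  from m obtain p where p: "p \<in> I" "p \<in># n + mset_set B"
    unfolding prime_mon_ideal_def by auto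
  show "n + {#a#} \<in> prime_mon_ideal P I"
  proof (cases "p \<in># n")
    case True
    then show ?thesis
      using mon p unfolding prime_mon_ideal_def by auto
  next
    case False
    with p have "p \<in> B"
      by (auto dest: mem_mset_set_imp_mem)
    with chains have "a \<le> p"
      by (blast dest: goes_through_imp_le)
    with I p a have "a \<in> I"
      by (auto simp: poset_ideal_def)
    then show ?thesis
      using mon unfolding prime_mon_ideal_def by auto
  qed
qed

lemma longest_b_chain_singleton:
  assumes "p \<in> P"
  shows "longest_b_chain P p [p] {#p#}"
proof -
  have "length C \<le> 1" if "mset C \<subseteq># {#p#}" for C :: "'a list"
    using size_mset_mono[OF that] by simp
  with assms show ?thesis
    unfolding longest_b_chain_def b_chain_def chain_in_def by auto
qed

lemma poset_ideal_if_P_stable_prime_mon_ideal: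
  assumes S: "S \<subseteq> P" and stable: "P_stable P (prime_mon_ideal P S)"
  shows "poset_ideal P S"
  unfolding poset_ideal_def
proof (intro conjI ballI impI)
  show "S \<subseteq> P" by (fact S)
  fix p q
  assume p: "p \<in> S" and q: "q \<in> P" and "q \<le> p"
  then have through: "goes_through q p [p]"
    by (simp add: goes_through_def)
  have pP: "p \<in> P"
    using S p by blast
  have "antichain_in P {p}"
    using pP by (simp add: antichain_in_def)
  moreover have "{#} + mset_set {p} \<in> prime_mon_ideal P S"
    using p pP by (simp add: prime_mon_ideal_def monomial_def)
  moreover have "longest_b_chain P p [p] ({#} + mset_set {p})"
    using longest_b_chain_singleton[OF pP] by simp
  ultimately have "{#} + {#q#} \<in> prime_mon_ideal P S"
    using stable[unfolded P_stable_def, rule_format, of "{#}" "{p}" q] q through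
    by (auto simp: monomial_def)
  then show "q \<in> S"
    by (simp add: prime_mon_ideal_def)
qed

theorem lemma3p17:
  fixes P :: "'a::order set"
  assumes "finite P"
  shows "(\<forall>I. poset_ideal P I \<longrightarrow>
            monomial_ideal P (prime_mon_ideal P I) \<and> P_stable P (prime_mon_ideal P I))
       \<and> (\<forall>S. S \<subseteq> P \<and> P_stable P (prime_mon_ideal P S) \<longrightarrow> poset_ideal P S)"
  using monomial_ideal_prime_mon_ideal P_stable_prime_mon_ideal
    poset_ideal_if_P_stable_prime_mon_ideal
  by blast

end
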